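(* Let $d>1$ and let $S$ be a collection of at most $d$ simplices over $[n]$, each of dimension at most $d$. Then all $d$-faces and all $(d-1)$-faces of $K(S)$ can be eliminated by a sequence of elementary $(d-1)$- and $(d-2)$-collapses (starting from $K(S)$).
   Context: A $d$-simplex is a subset of $[n]$ of size $d+1$; a simplicial complex is a family of simplices closed under taking subsets. For a set $S$ of simplices, $K(S)$ is the complex of all subsets of members of $S$. In a simplicial complex $K$, an $i$-face $\zeta$ is exposed if it is contained in exactly one $(i+1)$-face $\tau$ of $K$ (such $\tau$ is then necessarily a maximal face). An elementary $i$-collapse is the removal of such a pair $\zeta,\tau$ from $K$; the result is again a simplicial complex. *)

theory Defs
  imports Main
begin

text \<open>Simplices over [n] are finite nonempty subsets of {1..n}; a d-simplex has card d+1.\<close>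

definition gen_complex :: "nat set set \<Rightarrow> nat set set" where
  "gen_complex S = {\<tau>. \<exists>\<sigma>\<in>S. \<tau> \<subseteq> \<sigma>}"

definition exposed :: "nat set set \<Rightarrow> nat \<Rightarrow> nat set \<Rightarrow> bool" where
  "exposed K i \<zeta> \<longleftrightarrow> \<zeta> \<in> K \<and> card \<zeta> = i + 1 \<and>
     (\<exists>!\<tau>. \<tau> \<in> K \<and> card \<tau> = i + 2 \<and> \<zeta> \<subseteq> \<tau>)"

definition elem_collapse :: "nat \<Rightarrow> nat set set \<Rightarrow> nat set set \<Rightarrow> bool" where
  "elem_collapse i K K' \<longleftrightarrow> (\<exists>\<zeta> \<tau>. exposed K i \<zeta> \<and> \<tau> \<in> K \<and> card \<tau> = i + 2 \<and>
     \<zeta> \<subseteq> \<tau> \<and> K' = K - {\<zeta>, \<tau>})"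

end

theory Submission
  imports Defs
begin

text \<open>Remove the generators of \<open>K(S)\<close> one at a time, keeping the invariant that the current
  complex has, in cardinality \<open>\<ge> d\<close>, exactly the faces of \<open>K(T)\<close>, \<open>T\<close> the remaining generators,
  and still contains all faces of \<open>K(T)\<close> of cardinality \<open>d - 1\<close>.
  The counting principle: if \<open>A \<subseteq> \<sigma>\<close> is minimal with \<open>\<sigma> - A\<close> covered by \<open>T\<close>, then \<open>A = \<sigma> - \<sigma>'\<close>
  for some \<open>\<sigma>' \<in> T\<close>, so there are at most \<open>|T| < d\<close> such sets. Hence an uncovered generator
  \<open>\<sigma>\<close> with at least \<open>d\<close> vertices has a free vertex \<open>v\<close>, i.e. \<open>\<sigma> - {v}\<close> is uncovered, and a
  \<open>(d-1)\<close>-simplex \<open>\<sigma>\<close> is removed together with such a facet by a \<open>(d-2)\<close>-collapse. For a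
  \<open>d\<close>-simplex, a \<open>(d-1)\<close>-collapse removes \<open>\<sigma>\<close> with one free facet; each remaining free facet
  \<open>\<sigma> - {p}\<close> is then removed by a \<open>(d-2)\<close>-collapse through an uncovered ridge \<open>\<sigma> - {p, q}\<close>, where
  \<open>q\<close> is a free vertex whose facet is already gone, and such a ridge exists by a finer count.\<close>

definition top_collapse :: "nat \<Rightarrow> nat set set \<Rightarrow> nat set set \<Rightarrow> bool" where
  "top_collapse d K K' \<longleftrightarrow> elem_collapse (d - 1) K K' \<or> elem_collapse (d - 2) K K'"

definition upper_faces :: "nat \<Rightarrow> nat set set \<Rightarrow> nat set set" where
  "upper_faces d K = {\<tau> \<in> K. d \<le> card \<tau>}"

definition free_vertices :: "nat set set \<Rightarrow> nat set \<Rightarrow> nat set" where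
  "free_vertices T \<sigma> = {v \<in> \<sigma>. \<sigma> - {v} \<notin> gen_complex T}"

text \<open>The invariant of the collapsing process: \<open>T\<close> are the generators still present and \<open>E\<close>
  the faces of cardinality at least \<open>d\<close> of the generator being removed that remain to be collapsed.\<close>
definition agrees_above :: "nat \<Rightarrow> nat set set \<Rightarrow> nat set set \<Rightarrow> nat set set \<Rightarrow> bool" where
  "agrees_above d T E K \<longleftrightarrow> upper_faces d K = upper_faces d (gen_complex T) \<union> E
     \<and> {\<rho> \<in> gen_complex T. card \<rho> + 1 = d} \<subseteq> K"

lemma upper_faces_Diff [simp]: "upper_faces d (K - X) = upper_faces d K - X"
  by (auto simp: upper_faces_def)

lemma gen_complex_subset_closed: "\<tau> \<in> gen_complex T \<Longrightarrow> \<rho> \<subseteq> \<tau> \<Longrightarrow> \<rho> \<in> gen_complex T"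
  by (auto simp: gen_complex_def)

lemma gen_complex_insert: "gen_complex (insert \<sigma> T) = Pow \<sigma> \<union> gen_complex T"
  by (auto simp: gen_complex_def)

lemma card_Diff_doubleton:
  assumes "finite \<sigma>" "q \<in> \<sigma>" "q \<noteq> p"
  shows "card (\<sigma> - {p, q}) + 1 = card (\<sigma> - {p})"
  unfolding Diff_insert2[of \<sigma> p "{q}"] using assms card_Suc_Diff1[of "\<sigma> - {p}" q] by simp

lemma elem_collapseI:
  assumes "\<zeta> \<in> K" "card \<zeta> = i + 1" "\<tau> \<in> K" "card \<tau> = i + 2" "\<zeta> \<subseteq> \<tau>"
    and "\<And>\<tau>'. \<tau>' \<in> K \<Longrightarrow> card \<tau>' = i + 2 \<Longrightarrow> \<zeta> \<subseteq> \<tau>' \<Longrightarrow> \<tau>' = \<tau>"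
  shows "elem_collapse i K (K - {\<zeta>, \<tau>})"
proof -
  have "\<exists>!\<tau>'. \<tau>' \<in> K \<and> card \<tau>' = i + 2 \<and> \<zeta> \<subseteq> \<tau>'"
    using assms(3-6) by blast
  then have "exposed K i \<zeta>"
    unfolding exposed_def using assms(1,2) by blast
  then show ?thesis
    unfolding elem_collapse_def using assms(3-5) by blast
qed

lemma minimal_removal_in_image:
  assumes "A \<subseteq> \<sigma>" "\<sigma> - A \<in> gen_complex T" "\<forall>x\<in>A. \<sigma> - (A - {x}) \<notin> gen_complex T"
  shows "A \<in> (\<lambda>\<sigma>'. \<sigma> - \<sigma>') ` T"
proof -
  obtain \<sigma>' where \<sigma>': "\<sigma>' \<in> T" "\<sigma> - A \<subseteq> \<sigma>'"
    using assms(2) by (auto simp: gen_complex_def)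
  have "A \<subseteq> \<sigma> - \<sigma>'"
  proof
    fix x assume "x \<in> A"
    show "x \<in> \<sigma> - \<sigma>'"
    proof (rule ccontr)
      assume "x \<notin> \<sigma> - \<sigma>'"
      then have "\<sigma> - (A - {x}) \<subseteq> \<sigma>'"
        using \<sigma>'(2) by blast
      then show False
        using \<sigma>'(1) assms(3) \<open>x \<in> A\<close> by (auto simp: gen_complex_def)
    qed
  qed
  then have "A = \<sigma> - \<sigma>'"
    using \<sigma>'(2) by blast
  then show ?thesis
    using \<sigma>'(1) by blast
qed

lemma card_le_if_minimal_removals:
  assumes "finite T" "\<A> \<subseteq> Pow \<sigma>"
    and "\<And>A. A \<in> \<A> \<Longrightarrow> \<sigma> - A \<in> gen_complex T \<and> (\<forall>x\<in>A. \<sigma> - (A - {x}) \<notin> gen_complex T)"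
  shows "card \<A> \<le> card T"
proof -
  have "\<A> \<subseteq> (\<lambda>\<sigma>'. \<sigma> - \<sigma>') ` T"
  proof
    fix A assume "A \<in> \<A>"
    with assms(2,3) show "A \<in> (\<lambda>\<sigma>'. \<sigma> - \<sigma>') ` T"
      by (intro minimal_removal_in_image) auto
  qed
  then have "card \<A> \<le> card ((\<lambda>\<sigma>'. \<sigma> - \<sigma>') ` T)"
    using assms(1) by (simp add: card_mono)
  also have "\<dots> \<le> card T"
    using assms(1) by (rule card_image_le)
  finally show ?thesis .
qed

lemma exists_free_vertex:
  assumes "finite T" "\<sigma> \<notin> gen_complex T" "card T < card \<sigma>"
  shows "free_vertices T \<sigma> \<noteq> {}"
proof
  assume "free_vertices T \<sigma> = {}"
  then have "card ((\<lambda>v. {v}) ` \<sigma>) \<le> card T"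
    using assms(2) by (intro card_le_if_minimal_removals[OF assms(1)]) (auto simp: free_vertices_def)
  then show False
    using assms(3) by (simp add: card_image)
qed

lemma inj_on_doubleton_Times: "F \<inter> R = {} \<Longrightarrow> inj_on (\<lambda>(p, q). {p, q}) (F \<times> R)"
  by (auto simp: inj_on_def doubleton_eq_iff)

text \<open>The vertex sets \<open>{v}\<close>, \<open>v\<close> not free, and \<open>{p, q}\<close>, \<open>p \<in> F\<close>, \<open>q\<close> free but not in \<open>F\<close>,
  would all be minimal with \<open>\<sigma> - A\<close> covered, giving \<open>card T \<ge> card \<sigma> - card P + card F * card (P - F) \<ge>
  card \<sigma> - 1\<close> for \<open>P\<close> the free vertices.\<close>
lemma exists_free_ridge:
  assumes "finite T" "finite \<sigma>" "\<sigma> \<notin> gen_complex T" "card T + 2 \<le> card \<sigma>"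
    and F: "F \<subseteq> free_vertices T \<sigma>" "F \<noteq> {}" "free_vertices T \<sigma> - F \<noteq> {}"
  shows "\<exists>p\<in>F. \<exists>q\<in>free_vertices T \<sigma> - F. \<sigma> - {p, q} \<notin> gen_complex T"
proof (rule ccontr)
  assume covered: "\<not> ?thesis"
  define P where "P = free_vertices T \<sigma>"
  define R where "R = P - F"
  define \<A> where "\<A> = (\<lambda>v. {v}) ` (\<sigma> - P) \<union> (\<lambda>(p, q). {p, q}) ` (F \<times> R)"
  have "P \<subseteq> \<sigma>" "F \<subseteq> P" "F \<inter> R = {}"
    using F(1) by (auto simp: P_def R_def free_vertices_def)
  have fin: "finite P" "finite F" "finite R"
    using finite_subset[OF \<open>P \<subseteq> \<sigma>\<close> assms(2)] finite_subset[OF \<open>F \<subseteq> P\<close>]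
    by (simp_all add: R_def)
  have "card \<A> \<le> card T"
  proof (rule card_le_if_minimal_removals[OF assms(1)])
    show "\<A> \<subseteq> Pow \<sigma>"
      using \<open>P \<subseteq> \<sigma>\<close> \<open>F \<subseteq> P\<close> by (auto simp: \<A>_def R_def)
    fix A assume "A \<in> \<A>"
    then consider (vertex) v where "v \<in> \<sigma> - P" "A = {v}"
      | (ridge) p q where "p \<in> F" "q \<in> R" "A = {p, q}"
      unfolding \<A>_def by auto
    then show "\<sigma> - A \<in> gen_complex T \<and> (\<forall>x\<in>A. \<sigma> - (A - {x}) \<notin> gen_complex T)"
    proof cases
      case vertex
      then show ?thesis
        using assms(3) by (simp add: P_def free_vertices_def)
    next
      case ridge
      then have "p \<noteq> q" "p \<in> P" "q \<in> P"
        using \<open>F \<subseteq> P\<close> \<open>F \<inter> R = {}\<close> by (auto simp: R_def)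
      then show ?thesis
        using covered ridge by (auto simp: P_def R_def free_vertices_def insert_Diff_if)
    qed
  qed
  moreover have "card \<A> = card (\<sigma> - P) + card F * card R"
  proof -
    have "(\<lambda>v. {v}) ` (\<sigma> - P) \<inter> (\<lambda>(p, q). {p, q}) ` (F \<times> R) = {}"
      using \<open>F \<inter> R = {}\<close> by (auto simp: doubleton_eq_iff)
    then show ?thesis
      using fin assms(2) inj_on_doubleton_Times[OF \<open>F \<inter> R = {}\<close>]
      by (simp add: \<A>_def card_Un_disjoint card_image card_cartesian_product)
  qed
  moreover have "card F + card R = card P"
    using card_mono[OF fin(1) \<open>F \<subseteq> P\<close>] fin \<open>F \<subseteq> P\<close> by (simp add: R_def card_Diff_subset)
  moreover have "card (\<sigma> - P) + card P = card \<sigma>"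
    using card_mono[OF assms(2) \<open>P \<subseteq> \<sigma>\<close>] fin \<open>P \<subseteq> \<sigma>\<close> by (simp add: card_Diff_subset)
  moreover have "card F + card R \<le> card F * card R + 1"
    using F fin by (cases "card F"; cases "card R") (auto simp: R_def P_def)
  ultimately show False
    using assms(4) by linarith
qed

lemma agrees_above_collapse:
  assumes inv: "agrees_above d T E K" and "1 < d"
    and "\<tau> \<in> E" "\<zeta> \<in> K" "\<zeta> \<subseteq> \<tau>" "card \<tau> = card \<zeta> + 1" "d \<le> card \<tau>" "card \<tau> \<le> d + 1"
    and "\<zeta> \<notin> gen_complex T"
    and unique: "\<And>\<tau>'. \<tau>' \<in> E \<Longrightarrow> card \<tau>' = card \<tau> \<Longrightarrow> \<zeta> \<subseteq> \<tau>' \<Longrightarrow> \<tau>' = \<tau>"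
  shows "top_collapse d K (K - {\<zeta>, \<tau>})" "agrees_above d T (E - {\<zeta>, \<tau>}) (K - {\<zeta>, \<tau>})"
proof -
  have upper: "upper_faces d K = upper_faces d (gen_complex T) \<union> E"
    using inv by (simp add: agrees_above_def)
  have "\<tau> \<notin> gen_complex T"
    using assms(5,9) gen_complex_subset_closed by blast
  have "elem_collapse (card \<zeta> - 1) K (K - {\<zeta>, \<tau>})"
  proof (rule elem_collapseI)
    show "\<tau> \<in> K"
      using upper assms(3) by (auto simp: upper_faces_def)
    fix \<tau>' assume \<tau>': "\<tau>' \<in> K" "card \<tau>' = card \<zeta> - 1 + 2" "\<zeta> \<subseteq> \<tau>'"
    then have "card \<tau>' = card \<tau>"
      using assms(2,6,7) by linarith
    then have "\<tau>' \<in> upper_faces d K"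
      using \<tau>'(1) assms(7) by (simp add: upper_faces_def)
    then have "\<tau>' \<in> upper_faces d (gen_complex T) \<union> E"
      using upper by simp
    moreover have "\<tau>' \<notin> gen_complex T"
      using \<tau>'(3) assms(9) gen_complex_subset_closed by blast
    ultimately show "\<tau>' = \<tau>"
      using unique \<tau>'(3) \<open>card \<tau>' = card \<tau>\<close> by (auto simp: upper_faces_def)
  qed (use assms(2,4-7) in auto)
  moreover have "card \<zeta> - 1 = d - 1 \<or> card \<zeta> - 1 = d - 2"
    using assms(6-8) by linarith
  ultimately show "top_collapse d K (K - {\<zeta>, \<tau>})"
    unfolding top_collapse_def by auto
  have "\<zeta> \<notin> upper_faces d (gen_complex T)" "\<tau> \<notin> upper_faces d (gen_complex T)"
    using \<open>\<tau> \<notin> gen_complex T\<close> assms(9) by (simp_all add: upper_faces_def)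
  then show "agrees_above d T (E - {\<zeta>, \<tau>}) (K - {\<zeta>, \<tau>})"
    using inv \<open>\<tau> \<notin> gen_complex T\<close> assms(9) by (auto simp: agrees_above_def)
qed

text \<open>The facet \<open>\<sigma> - {q}\<close> is already gone, so \<open>\<sigma> - {p}\<close> is the only remaining face of
  cardinality \<open>d\<close> containing the uncovered ridge \<open>\<sigma> - {p, q}\<close>.\<close>
lemma collapse_free_facet:
  assumes "1 < d" "finite \<sigma>" "card \<sigma> = d + 1"
    and inv: "agrees_above d T ((\<lambda>p. \<sigma> - {p}) ` F) K"
    and ridges: "\<forall>p\<in>F. \<forall>q\<in>\<sigma> - {p}. \<sigma> - {p, q} \<in> K"
    and "F \<subseteq> \<sigma>" "p \<in> F" "q \<in> \<sigma> - F" "\<sigma> - {p, q} \<notin> gen_complex T"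
  shows "top_collapse d K (K - {\<sigma> - {p, q}, \<sigma> - {p}})"
    and "agrees_above d T ((\<lambda>p. \<sigma> - {p}) ` (F - {p})) (K - {\<sigma> - {p, q}, \<sigma> - {p}})"
    and "\<forall>p'\<in>F - {p}. \<forall>q'\<in>\<sigma> - {p'}. \<sigma> - {p', q'} \<in> K - {\<sigma> - {p, q}, \<sigma> - {p}}"
proof -
  have "q \<in> \<sigma>" "q \<noteq> p"
    using assms(7,8) by auto
  then have card_ridge: "card (\<sigma> - {p}) = card (\<sigma> - {p, q}) + 1" "card (\<sigma> - {p}) = d"
    using assms(2,3,6,7) card_Diff_doubleton[OF assms(2)] by (auto simp: card_Diff_singleton)
  have "\<sigma> - {p, q} \<in> K"
    using ridges assms(7) \<open>q \<in> \<sigma>\<close> \<open>q \<noteq> p\<close> by blast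
  moreover have "\<tau>' = \<sigma> - {p}"
    if \<tau>': "\<tau>' \<in> (\<lambda>p. \<sigma> - {p}) ` F" "\<sigma> - {p, q} \<subseteq> \<tau>'" for \<tau>'
  proof -
    obtain p' where p': "p' \<in> F" "\<tau>' = \<sigma> - {p'}"
      using \<tau>'(1) by blast
    then have "p' \<in> {p, q}"
      using \<tau>'(2) assms(6) by blast
    then show ?thesis
      using p' assms(8) by auto
  qed
  ultimately have collapse: "top_collapse d K (K - {\<sigma> - {p, q}, \<sigma> - {p}})"
    and inv': "agrees_above d T ((\<lambda>p. \<sigma> - {p}) ` F - {\<sigma> - {p, q}, \<sigma> - {p}})
      (K - {\<sigma> - {p, q}, \<sigma> - {p}})"
    using agrees_above_collapse[OF inv assms(1) imageI[OF assms(7)], of "\<sigma> - {p, q}"]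
      card_ridge assms(9) by auto
  show "top_collapse d K (K - {\<sigma> - {p, q}, \<sigma> - {p}})"
    by (fact collapse)
  have "\<sigma> - {p'} \<noteq> \<sigma> - {p, q}" if "p' \<in> F" for p'
    using that assms(6,7) \<open>q \<in> \<sigma>\<close> \<open>q \<noteq> p\<close> by (cases "p' = p") blast+
  then have "(\<lambda>p. \<sigma> - {p}) ` F - {\<sigma> - {p, q}, \<sigma> - {p}} = (\<lambda>p. \<sigma> - {p}) ` F - {\<sigma> - {p}}"
    by auto
  also have "\<dots> = (\<lambda>p. \<sigma> - {p}) ` (F - {p})"
    using assms(6,7) by auto
  finally show "agrees_above d T ((\<lambda>p. \<sigma> - {p}) ` (F - {p})) (K - {\<sigma> - {p, q}, \<sigma> - {p}})"
    using inv' by simp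
  show "\<forall>p'\<in>F - {p}. \<forall>q'\<in>\<sigma> - {p'}. \<sigma> - {p', q'} \<in> K - {\<sigma> - {p, q}, \<sigma> - {p}}"
  proof (intro ballI)
    fix p' q' assume p': "p' \<in> F - {p}" and q': "q' \<in> \<sigma> - {p'}"
    then have "p' \<in> \<sigma> - {p, q}"
      using assms(6,8) by blast
    then have "\<sigma> - {p', q'} \<noteq> \<sigma> - {p, q}" "\<sigma> - {p', q'} \<noteq> \<sigma> - {p}"
      by blast+
    then show "\<sigma> - {p', q'} \<in> K - {\<sigma> - {p, q}, \<sigma> - {p}}"
      using ridges p' q' by blast
  qed
qed

lemma collapse_free_facets:
  assumes "1 < d" "finite T" "card T < d" "finite \<sigma>" "card \<sigma> = d + 1" "\<sigma> \<notin> gen_complex T"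
  shows "finite F \<Longrightarrow> F \<subseteq> free_vertices T \<sigma> \<Longrightarrow> free_vertices T \<sigma> - F \<noteq> {}
    \<Longrightarrow> agrees_above d T ((\<lambda>p. \<sigma> - {p}) ` F) K
    \<Longrightarrow> \<forall>p\<in>F. \<forall>q\<in>\<sigma> - {p}. \<sigma> - {p, q} \<in> K
    \<Longrightarrow> \<exists>K'. (top_collapse d)\<^sup>*\<^sup>* K K' \<and> agrees_above d T {} K'"
proof (induction F arbitrary: K rule: finite_psubset_induct)
  case (psubset F)
  show ?case
  proof (cases "F = {}")
    case True
    then show ?thesis
      using psubset.prems(3) by auto
  next
    case False
    then obtain p q where p: "p \<in> F" and q: "q \<in> free_vertices T \<sigma> - F"
      and ridge: "\<sigma> - {p, q} \<notin> gen_complex T"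
      using exists_free_ridge[OF assms(2,4,6) _ psubset.prems(1) False psubset.prems(2)] assms(3,5) by auto
    have "F \<subseteq> \<sigma>" "q \<in> \<sigma> - F"
      using psubset.prems(1) q by (auto simp: free_vertices_def)
    note step = collapse_free_facet[OF assms(1,4,5) psubset.prems(3,4) \<open>F \<subseteq> \<sigma>\<close> p \<open>q \<in> \<sigma> - F\<close> ridge]
    have "F - {p} \<subset> F" "F - {p} \<subseteq> free_vertices T \<sigma>" "free_vertices T \<sigma> - (F - {p}) \<noteq> {}"
      using p q psubset.prems(1) by blast+
    then have "\<exists>K'. (top_collapse d)\<^sup>*\<^sup>* (K - {\<sigma> - {p, q}, \<sigma> - {p}}) K' \<and> agrees_above d T {} K'"
      by (rule psubset.IH[OF _ _ _ step(2,3)])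
    then obtain K' where "(top_collapse d)\<^sup>*\<^sup>* (K - {\<sigma> - {p, q}, \<sigma> - {p}}) K'" "agrees_above d T {} K'"
      by blast
    then show ?thesis
      using step(1) converse_rtranclp_into_rtranclp by metis
  qed
qed

lemma agrees_above_extra_subset: "agrees_above d T E K \<Longrightarrow> E \<subseteq> K"
  by (auto simp: agrees_above_def upper_faces_def)

lemma agrees_above_insert:
  assumes "agrees_above d (insert \<sigma> T) {} K"
  shows "agrees_above d T {\<tau>. \<tau> \<subseteq> \<sigma> \<and> d \<le> card \<tau> \<and> \<tau> \<notin> gen_complex T} K"
    and "\<And>\<rho>. \<rho> \<subseteq> \<sigma> \<Longrightarrow> card \<rho> + 1 = d \<Longrightarrow> \<rho> \<in> K"
  using assms by (auto simp: agrees_above_def upper_faces_def gen_complex_insert)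

lemma large_faces_of_simplex:
  assumes "finite \<sigma>" "card \<sigma> = d + 1" "\<sigma> \<notin> gen_complex T"
  shows "{\<tau>. \<tau> \<subseteq> \<sigma> \<and> d \<le> card \<tau> \<and> \<tau> \<notin> gen_complex T}
    = insert \<sigma> ((\<lambda>p. \<sigma> - {p}) ` free_vertices T \<sigma>)"
proof (intro equalityI subsetI)
  fix \<tau> assume \<tau>: "\<tau> \<in> {\<tau>. \<tau> \<subseteq> \<sigma> \<and> d \<le> card \<tau> \<and> \<tau> \<notin> gen_complex T}"
  show "\<tau> \<in> insert \<sigma> ((\<lambda>p. \<sigma> - {p}) ` free_vertices T \<sigma>)"
  proof (cases "\<tau> = \<sigma>")
    case False
    then obtain v where v: "v \<in> \<sigma>" "\<tau> \<subseteq> \<sigma> - {v}"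
      using \<tau> by blast
    moreover have "card (\<sigma> - {v}) \<le> card \<tau>"
      using v(1) \<tau> assms(1,2) by (simp add: card_Diff_singleton)
    ultimately have "\<tau> = \<sigma> - {v}"
      using assms(1) by (meson card_seteq finite_Diff)
    then show ?thesis
      using v(1) \<tau> by (auto simp: free_vertices_def)
  qed simp
qed (use assms in \<open>auto simp: free_vertices_def card_Diff_singleton\<close>)

lemma collapse_simplex_with_facet:
  assumes "1 < d" "finite \<sigma>" "card \<sigma> = d + 1"
    and inv: "agrees_above d T (insert \<sigma> ((\<lambda>p. \<sigma> - {p}) ` P)) K"
    and ridges: "\<And>\<rho>. \<rho> \<subseteq> \<sigma> \<Longrightarrow> card \<rho> + 1 = d \<Longrightarrow> \<rho> \<in> K"
    and "P \<subseteq> \<sigma>" "p0 \<in> P" "\<sigma> - {p0} \<notin> gen_complex T"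
  shows "top_collapse d K (K - {\<sigma> - {p0}, \<sigma>})"
    and "agrees_above d T ((\<lambda>p. \<sigma> - {p}) ` (P - {p0})) (K - {\<sigma> - {p0}, \<sigma>})"
    and "\<forall>p\<in>P - {p0}. \<forall>q\<in>\<sigma> - {p}. \<sigma> - {p, q} \<in> K - {\<sigma> - {p0}, \<sigma>}"
proof -
  have card_facet: "card (\<sigma> - {p}) = d" if "p \<in> \<sigma>" for p
    using that assms(2,3) by (simp add: card_Diff_singleton)
  have facet: "\<sigma> - {p0} \<in> K" "card \<sigma> = card (\<sigma> - {p0}) + 1"
    using agrees_above_extra_subset[OF inv] assms(3,6,7) card_facet by auto
  have unique: "\<tau>' = \<sigma>" if "\<tau>' \<in> insert \<sigma> ((\<lambda>p. \<sigma> - {p}) ` P)" "card \<tau>' = card \<sigma>" for \<tau>'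
    using that assms(3,6) card_facet by auto
  show "top_collapse d K (K - {\<sigma> - {p0}, \<sigma>})"
    using agrees_above_collapse[OF inv assms(1) insertI1 facet(1) Diff_subset facet(2) _ _
        assms(8) unique] assms(3) by auto
  have inv': "agrees_above d T (insert \<sigma> ((\<lambda>p. \<sigma> - {p}) ` P) - {\<sigma> - {p0}, \<sigma>}) (K - {\<sigma> - {p0}, \<sigma>})"
    using agrees_above_collapse[OF inv assms(1) insertI1 facet(1) Diff_subset facet(2) _ _
        assms(8) unique] assms(3) by auto
  have "insert \<sigma> ((\<lambda>p. \<sigma> - {p}) ` P) - {\<sigma> - {p0}, \<sigma>} = (\<lambda>p. \<sigma> - {p}) ` (P - {p0})"
    using assms(6,7) by auto
  then show "agrees_above d T ((\<lambda>p. \<sigma> - {p}) ` (P - {p0})) (K - {\<sigma> - {p0}, \<sigma>})"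
    using inv' by simp
  show "\<forall>p\<in>P - {p0}. \<forall>q\<in>\<sigma> - {p}. \<sigma> - {p, q} \<in> K - {\<sigma> - {p0}, \<sigma>}"
  proof (intro ballI)
    fix p q assume p: "p \<in> P - {p0}" and q: "q \<in> \<sigma> - {p}"
    have "p \<in> \<sigma>" "p0 \<in> \<sigma>"
      using p assms(6,7) by blast+
    have "card (\<sigma> - {p, q}) + 1 = d"
      using card_Diff_doubleton[OF assms(2), of q p] card_facet[OF \<open>p \<in> \<sigma>\<close>] q by simp
    then have "card (\<sigma> - {p, q}) \<noteq> card (\<sigma> - {p0})" "card (\<sigma> - {p, q}) \<noteq> card \<sigma>"
      using card_facet[OF \<open>p0 \<in> \<sigma>\<close>] assms(3) by simp_all
    then have "\<sigma> - {p, q} \<noteq> \<sigma> - {p0}" "\<sigma> - {p, q} \<noteq> \<sigma>"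
      by metis+
    then show "\<sigma> - {p, q} \<in> K - {\<sigma> - {p0}, \<sigma>}"
      using ridges[OF Diff_subset \<open>card (\<sigma> - {p, q}) + 1 = d\<close>] by simp
  qed
qed

lemma collapse_full_simplex:
  assumes "1 < d" "finite T" "card T < d" "finite \<sigma>" "card \<sigma> = d + 1" "\<sigma> \<notin> gen_complex T"
    and inv: "agrees_above d T (insert \<sigma> ((\<lambda>p. \<sigma> - {p}) ` free_vertices T \<sigma>)) K"
    and ridges: "\<And>\<rho>. \<rho> \<subseteq> \<sigma> \<Longrightarrow> card \<rho> + 1 = d \<Longrightarrow> \<rho> \<in> K"
  shows "\<exists>K'. (top_collapse d)\<^sup>*\<^sup>* K K' \<and> agrees_above d T {} K'"
proof -
  define P where "P = free_vertices T \<sigma>"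
  obtain p0 where p0: "p0 \<in> P"
    using exists_free_vertex[OF assms(2,6)] assms(3,5) unfolding P_def by fastforce
  have "P \<subseteq> \<sigma>" "\<sigma> - {p0} \<notin> gen_complex T"
    using p0 by (auto simp: P_def free_vertices_def)
  note step = collapse_simplex_with_facet[OF assms(1,4,5) inv[folded P_def] ridges \<open>P \<subseteq> \<sigma>\<close> p0
      \<open>\<sigma> - {p0} \<notin> gen_complex T\<close>]
  have "finite (P - {p0})" "P - {p0} \<subseteq> free_vertices T \<sigma>" "free_vertices T \<sigma> - (P - {p0}) \<noteq> {}"
    using finite_subset[OF \<open>P \<subseteq> \<sigma>\<close> assms(4)] p0 by (auto simp: P_def)
  then obtain K' where "(top_collapse d)\<^sup>*\<^sup>* (K - {\<sigma> - {p0}, \<sigma>}) K'" "agrees_above d T {} K'"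
    using collapse_free_facets[OF assms(1-6) _ _ _ step(2,3)] by blast
  then show ?thesis
    using step(1) converse_rtranclp_into_rtranclp by metis
qed

lemma large_faces_of_facet:
  assumes "finite \<sigma>" "card \<sigma> = d" "\<sigma> \<notin> gen_complex T"
  shows "{\<tau>. \<tau> \<subseteq> \<sigma> \<and> d \<le> card \<tau> \<and> \<tau> \<notin> gen_complex T} = {\<sigma>}"
proof (intro equalityI subsetI)
  fix \<tau> assume "\<tau> \<in> {\<tau>. \<tau> \<subseteq> \<sigma> \<and> d \<le> card \<tau> \<and> \<tau> \<notin> gen_complex T}"
  then have "\<tau> \<subseteq> \<sigma>" "card \<sigma> \<le> card \<tau>"
    using assms(2) by simp_all
  then show "\<tau> \<in> {\<sigma>}"
    using card_seteq[OF assms(1)] by blast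
qed (use assms in simp)

lemma collapse_generator:
  assumes "1 < d" "finite T" "card T < d" "finite \<sigma>" "card \<sigma> \<le> d + 1"
    and inv: "agrees_above d (insert \<sigma> T) {} K"
  shows "\<exists>K'. (top_collapse d)\<^sup>*\<^sup>* K K' \<and> agrees_above d T {} K'"
proof -
  define E where "E = {\<tau>. \<tau> \<subseteq> \<sigma> \<and> d \<le> card \<tau> \<and> \<tau> \<notin> gen_complex T}"
  note inv_T = agrees_above_insert(1)[OF inv, folded E_def]
    and ridges = agrees_above_insert(2)[OF inv]
  show ?thesis
  proof (cases "E = {}")
    case True
    then show ?thesis
      using inv_T by (blast intro: rtranclp.rtrancl_refl)
  next
    case False
    then obtain \<tau> where "\<tau> \<subseteq> \<sigma>" "d \<le> card \<tau>" "\<tau> \<notin> gen_complex T"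
      by (auto simp: E_def)
    then have "d \<le> card \<sigma>" "\<sigma> \<notin> gen_complex T"
      using card_mono[OF assms(4)] gen_complex_subset_closed by (blast intro: le_trans)+
    then consider "card \<sigma> = d" | "card \<sigma> = d + 1"
      using assms(5) by linarith
    then show ?thesis
    proof cases
      case 1
      obtain v where v: "v \<in> \<sigma>" "\<sigma> - {v} \<notin> gen_complex T"
        using exists_free_vertex[OF assms(2) \<open>\<sigma> \<notin> gen_complex T\<close>] 1 assms(3)
        by (auto simp: free_vertices_def)
      have "card \<sigma> = card (\<sigma> - {v}) + 1"
        using card_Suc_Diff1[OF assms(4) v(1)] by simp
      moreover have "\<sigma> - {v} \<in> K"
        using ridges[OF Diff_subset] \<open>card \<sigma> = card (\<sigma> - {v}) + 1\<close> 1 by simp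
      ultimately have "top_collapse d K (K - {\<sigma> - {v}, \<sigma>})"
        and "agrees_above d T ({\<sigma>} - {\<sigma> - {v}, \<sigma>}) (K - {\<sigma> - {v}, \<sigma>})"
        using agrees_above_collapse[OF inv_T[unfolded E_def large_faces_of_facet[OF assms(4) 1
            \<open>\<sigma> \<notin> gen_complex T\<close>]] assms(1) singletonI _ Diff_subset] 1 v(2) by auto
      then show ?thesis
        by (auto intro: r_into_rtranclp)
    next
      case 2
      show ?thesis
        using collapse_full_simplex[OF assms(1-4) 2 \<open>\<sigma> \<notin> gen_complex T\<close> _ ridges]
          inv_T[unfolded E_def large_faces_of_simplex[OF assms(4) 2 \<open>\<sigma> \<notin> gen_complex T\<close>]]
        by blast
    qed
  qed
qed

lemma collapse_generators:
  assumes "1 < d"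
  shows "finite T \<Longrightarrow> card T \<le> d \<Longrightarrow> \<forall>\<sigma>\<in>T. finite \<sigma> \<and> card \<sigma> \<le> d + 1
    \<Longrightarrow> agrees_above d T {} K \<Longrightarrow> \<exists>K'. (top_collapse d)\<^sup>*\<^sup>* K K' \<and> (\<forall>\<tau>\<in>K'. card \<tau> < d)"
proof (induction T arbitrary: K rule: finite_induct)
  case empty
  then have "\<forall>\<tau>\<in>K. card \<tau> < d"
    by (auto simp: agrees_above_def upper_faces_def gen_complex_def not_le)
  then show ?case
    by (blast intro: rtranclp.rtrancl_refl)
next
  case (insert \<sigma> T)
  have "card T < d" "card T \<le> d"
    using insert.hyps(1,2) insert.prems(1) by simp_all
  obtain K1 where K1: "(top_collapse d)\<^sup>*\<^sup>* K K1" "agrees_above d T {} K1"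
    using collapse_generator[OF assms insert.hyps(1) \<open>card T < d\<close> _ _ insert.prems(3)]
      insert.prems(2) by blast
  moreover obtain K' where "(top_collapse d)\<^sup>*\<^sup>* K1 K'" "\<forall>\<tau>\<in>K'. card \<tau> < d"
    using insert.IH[OF \<open>card T \<le> d\<close> _ K1(2)] insert.prems(2) by blast
  ultimately show ?case
    by (blast intro: rtranclp_trans)
qed

theorem claim3p3:
  fixes d n :: nat and S :: "nat set set"
  assumes "d > 1"
    and "finite S" and "card S \<le> d"
    and "\<forall>\<sigma>\<in>S. \<sigma> \<subseteq> {1..n} \<and> \<sigma> \<noteq> {} \<and> card \<sigma> \<le> d + 1"
  shows "\<exists>K'. (\<lambda>K K'. elem_collapse (d - 1) K K' \<or> elem_collapse (d - 2) K K')\<^sup>*\<^sup>*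
              (gen_complex S) K'
           \<and> (\<forall>\<sigma>\<in>K'. card \<sigma> \<noteq> d + 1 \<and> card \<sigma> \<noteq> d)"
proof -
  have "\<forall>\<sigma>\<in>S. finite \<sigma> \<and> card \<sigma> \<le> d + 1"
    using assms(4) finite_subset[of _ "{1..n}"] by simp
  moreover have "agrees_above d S {} (gen_complex S)"
    by (simp add: agrees_above_def upper_faces_def)
  ultimately obtain K' where K': "(top_collapse d)\<^sup>*\<^sup>* (gen_complex S) K'" "\<forall>\<tau>\<in>K'. card \<tau> < d"
    using collapse_generators[OF assms(1-3)] by blast
  have "(\<lambda>K K'. elem_collapse (d - 1) K K' \<or> elem_collapse (d - 2) K K') = top_collapse d"
    by (simp add: fun_eq_iff top_collapse_def)
  moreover have "\<forall>\<sigma>\<in>K'. card \<sigma> \<noteq> d + 1 \<and> card \<sigma> \<noteq> d"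
    using K'(2) by fastforce
  ultimately show ?thesis
    using K'(1) by (intro exI[of _ K']) simp
qed

end
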